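(* Let $A$ be a commutative special Frobenius algebra in $\mathcal{C}$ whose underlying object decomposes as a direct sum $A=1\oplus F$ of the tensor unit $1$ and an object $F$, where $F\neq 0$ and $\theta_F=-\mathrm{id}_F$. Then $F\otimes F\cong 1$.
   Context: Standing assumptions: $k$ is a field with $\mathrm{char}(k)\neq 2$. $\mathcal{C}$ is a $k$-linear additive idempotent-complete ribbon category, strict as a monoidal category, with bilinear tensor product and absolutely simple tensor unit ($\mathrm{End}_{\mathcal{C}}(1)=k\,\mathrm{id}_1$), with braiding $c$ and twist $\theta$. A Frobenius algebra in $\mathcal{C}$ is an object $A$ with associative unital multiplication $\mu:A\otimes A\to A$, unit $\eta:1\to A$, coassociative counital comultiplication $\Delta:A\to A\otimes A$, counit $\epsilon:A\to 1$, such that $(\mathrm{id}_A\otimes\mu)\circ(\Delta\otimes\mathrm{id}_A)=\Delta\circ\mu=(\mu\otimes\mathrm{id}_A)\circ(\mathrm{id}_A\otimes\Delta)$. It is commutative if $\mu\circ c_{A,A}=\mu$, and special if $\epsilon\circ\eta\in k^\times\,\mathrm{id}_1$ and $\mu\circ\Delta\in k^\times\,\mathrm{id}_A$. *)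

theory Defs
  imports Main
begin

text \<open>A k-linear strict monoidal category with braiding, left duals and twist,
  presented by its structure maps.  Every element of type 'm is a morphism
  (with domain Dom f and codomain Cod f); every element of type 'o is an object.
  Comp g f is the composite "g after f".\<close>

record ('o, 'm, 'k) rcat =
  Dom   :: "'m \<Rightarrow> 'o"
  Cod   :: "'m \<Rightarrow> 'o"
  Id    :: "'o \<Rightarrow> 'm"
  Comp  :: "'m \<Rightarrow> 'm \<Rightarrow> 'm"
  Add   :: "'m \<Rightarrow> 'm \<Rightarrow> 'm"
  Smul  :: "'k \<Rightarrow> 'm \<Rightarrow> 'm"
  Zero  :: "'o \<Rightarrow> 'o \<Rightarrow> 'm"
  TensO :: "'o \<Rightarrow> 'o \<Rightarrow> 'o"
  TensM :: "'m \<Rightarrow> 'm \<Rightarrow> 'm"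
  Unit  :: "'o"
  Braid :: "'o \<Rightarrow> 'o \<Rightarrow> 'm"
  Twist :: "'o \<Rightarrow> 'm"
  Dual  :: "'o \<Rightarrow> 'o"
  Ev    :: "'o \<Rightarrow> 'm"
  Coev  :: "'o \<Rightarrow> 'm"

definition hom :: "('o, 'm, 'k) rcat \<Rightarrow> 'm \<Rightarrow> 'o \<Rightarrow> 'o \<Rightarrow> bool" where
  "hom C f X Y \<longleftrightarrow> Dom C f = X \<and> Cod C f = Y"

definition iso_mor :: "('o, 'm, 'k) rcat \<Rightarrow> 'm \<Rightarrow> 'o \<Rightarrow> 'o \<Rightarrow> bool" where
  "iso_mor C f X Y \<longleftrightarrow> hom C f X Y \<and>
     (\<exists>g. hom C g Y X \<and> Comp C g f = Id C X \<and> Comp C f g = Id C Y)"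

definition isomorphic :: "('o, 'm, 'k) rcat \<Rightarrow> 'o \<Rightarrow> 'o \<Rightarrow> bool" where
  "isomorphic C X Y \<longleftrightarrow> (\<exists>f. iso_mor C f X Y)"

definition is_biproduct :: "('o, 'm, 'k) rcat \<Rightarrow> 'o \<Rightarrow> 'o \<Rightarrow> 'o \<Rightarrow> 'm \<Rightarrow> 'm \<Rightarrow> 'm \<Rightarrow> 'm \<Rightarrow> bool" where
  "is_biproduct C S X Y i1 p1 i2 p2 \<longleftrightarrow>
     hom C i1 X S \<and> hom C p1 S X \<and> hom C i2 Y S \<and> hom C p2 S Y \<and>
     Comp C p1 i1 = Id C X \<and> Comp C p2 i2 = Id C Y \<and>
     Add C (Comp C i1 p1) (Comp C i2 p2) = Id C S"

definition zero_object :: "('o, 'm, 'k) rcat \<Rightarrow> 'o \<Rightarrow> bool" where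
  "zero_object C Z \<longleftrightarrow> (\<forall>f. (Dom C f = Z \<longrightarrow> f = Zero C Z (Cod C f)) \<and>
                              (Cod C f = Z \<longrightarrow> f = Zero C (Dom C f) Z))"

definition dual_mor :: "('o, 'm, 'k) rcat \<Rightarrow> 'm \<Rightarrow> 'm" where
  "dual_mor C f = (let X = Dom C f; Y = Cod C f in
     Comp C (TensM C (Ev C Y) (Id C (Dual C X)))
      (Comp C (TensM C (TensM C (Id C (Dual C Y)) f) (Id C (Dual C X)))
        (TensM C (Id C (Dual C Y)) (Coev C X))))"

locale ribbon_category =
  fixes C :: "('o, 'm, 'k::field) rcat"
  assumes char_not_2: "(2::'k) \<noteq> 0"
  and id_hom: "hom C (Id C X) X X"
  and comp_hom: "Dom C g = Cod C f \<Longrightarrow> hom C (Comp C g f) (Dom C f) (Cod C g)"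
  and comp_id_right: "Comp C f (Id C (Dom C f)) = f"
  and comp_id_left: "Comp C (Id C (Cod C f)) f = f"
  and comp_assoc: "\<lbrakk>Dom C h = Cod C g; Dom C g = Cod C f\<rbrakk> \<Longrightarrow>
         Comp C h (Comp C g f) = Comp C (Comp C h g) f"
  and zero_hom: "hom C (Zero C X Y) X Y"
  and add_hom: "\<lbrakk>hom C f X Y; hom C g X Y\<rbrakk> \<Longrightarrow> hom C (Add C f g) X Y"
  and smul_hom: "hom C f X Y \<Longrightarrow> hom C (Smul C a f) X Y"
  and add_assoc: "\<lbrakk>hom C f X Y; hom C g X Y; hom C h X Y\<rbrakk> \<Longrightarrow>
         Add C (Add C f g) h = Add C f (Add C g h)"
  and add_comm: "\<lbrakk>hom C f X Y; hom C g X Y\<rbrakk> \<Longrightarrow> Add C f g = Add C g f"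
  and add_zero: "hom C f X Y \<Longrightarrow> Add C f (Zero C X Y) = f"
  and add_neg: "hom C f X Y \<Longrightarrow> Add C f (Smul C (-1) f) = Zero C X Y"
  and smul_one: "Smul C 1 f = f"
  and smul_smul: "Smul C a (Smul C b f) = Smul C (a * b) f"
  and smul_add_scalar: "Smul C (a + b) f = Add C (Smul C a f) (Smul C b f)"
  and smul_add_mor: "\<lbrakk>hom C f X Y; hom C g X Y\<rbrakk> \<Longrightarrow>
         Smul C a (Add C f g) = Add C (Smul C a f) (Smul C a g)"
  and comp_add_left: "\<lbrakk>hom C f X Y; hom C g X Y; hom C h Y Z\<rbrakk> \<Longrightarrow>
         Comp C h (Add C f g) = Add C (Comp C h f) (Comp C h g)"
  and comp_add_right: "\<lbrakk>hom C f Y Z; hom C g Y Z; hom C h X Y\<rbrakk> \<Longrightarrow>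
         Comp C (Add C f g) h = Add C (Comp C f h) (Comp C g h)"
  and comp_smul_left: "Dom C g = Cod C f \<Longrightarrow> Comp C (Smul C a g) f = Smul C a (Comp C g f)"
  and comp_smul_right: "Dom C g = Cod C f \<Longrightarrow> Comp C g (Smul C a f) = Smul C a (Comp C g f)"
  and has_zero_object: "\<exists>Z. zero_object C Z"
  and has_biproducts: "\<exists>S i1 p1 i2 p2. is_biproduct C S X Y i1 p1 i2 p2"
  and idempotents_split: "\<lbrakk>hom C e X X; Comp C e e = e\<rbrakk> \<Longrightarrow>
         \<exists>Y r s. hom C r X Y \<and> hom C s Y X \<and> Comp C r s = Id C Y \<and> Comp C s r = e"
  and tensO_assoc: "TensO C (TensO C X Y) Z = TensO C X (TensO C Y Z)"
  and tensO_unit_left: "TensO C (Unit C) X = X"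
  and tensO_unit_right: "TensO C X (Unit C) = X"
  and tensM_hom: "hom C (TensM C f g) (TensO C (Dom C f) (Dom C g)) (TensO C (Cod C f) (Cod C g))"
  and tensM_id: "TensM C (Id C X) (Id C Y) = Id C (TensO C X Y)"
  and tensM_interchange: "\<lbrakk>Dom C g = Cod C f; Dom C g' = Cod C f'\<rbrakk> \<Longrightarrow>
         TensM C (Comp C g f) (Comp C g' f') = Comp C (TensM C g g') (TensM C f f')"
  and tensM_assoc: "TensM C (TensM C f g) h = TensM C f (TensM C g h)"
  and tensM_unit_left: "TensM C (Id C (Unit C)) f = f"
  and tensM_unit_right: "TensM C f (Id C (Unit C)) = f"
  and tensM_add_left: "\<lbrakk>hom C f X Y; hom C g X Y\<rbrakk> \<Longrightarrow>
         TensM C (Add C f g) h = Add C (TensM C f h) (TensM C g h)"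
  and tensM_add_right: "\<lbrakk>hom C f X Y; hom C g X Y\<rbrakk> \<Longrightarrow>
         TensM C h (Add C f g) = Add C (TensM C h f) (TensM C h g)"
  and tensM_smul_left: "TensM C (Smul C a f) g = Smul C a (TensM C f g)"
  and tensM_smul_right: "TensM C f (Smul C a g) = Smul C a (TensM C f g)"
  and braid_iso: "iso_mor C (Braid C X Y) (TensO C X Y) (TensO C Y X)"
  and braid_natural: "Comp C (Braid C (Cod C f) (Cod C g)) (TensM C f g) =
         Comp C (TensM C g f) (Braid C (Dom C f) (Dom C g))"
  and braid_hexagon1: "Braid C X (TensO C Y Z) =
         Comp C (TensM C (Id C Y) (Braid C X Z)) (TensM C (Braid C X Y) (Id C Z))"
  and braid_hexagon2: "Braid C (TensO C X Y) Z =
         Comp C (TensM C (Braid C X Z) (Id C Y)) (TensM C (Id C X) (Braid C Y Z))"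
  and ev_hom: "hom C (Ev C X) (TensO C (Dual C X) X) (Unit C)"
  and coev_hom: "hom C (Coev C X) (Unit C) (TensO C X (Dual C X))"
  and zigzag1: "Comp C (TensM C (Id C X) (Ev C X)) (TensM C (Coev C X) (Id C X)) = Id C X"
  and zigzag2: "Comp C (TensM C (Ev C X) (Id C (Dual C X))) (TensM C (Id C (Dual C X)) (Coev C X))
         = Id C (Dual C X)"
  and twist_iso: "iso_mor C (Twist C X) X X"
  and twist_natural: "Comp C (Twist C (Cod C f)) f = Comp C f (Twist C (Dom C f))"
  and twist_tensor: "Twist C (TensO C X Y) =
         Comp C (Comp C (Braid C Y X) (Braid C X Y)) (TensM C (Twist C X) (Twist C Y))"
  and twist_unit: "Twist C (Unit C) = Id C (Unit C)"
  and twist_dual: "Twist C (Dual C X) = dual_mor C (Twist C X)"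
  and unit_nonzero: "Id C (Unit C) \<noteq> Zero C (Unit C) (Unit C)"
  and unit_abs_simple: "hom C f (Unit C) (Unit C) \<Longrightarrow> \<exists>a. f = Smul C a (Id C (Unit C))"

definition frobenius_algebra ::
  "('o, 'm, 'k) rcat \<Rightarrow> 'o \<Rightarrow> 'm \<Rightarrow> 'm \<Rightarrow> 'm \<Rightarrow> 'm \<Rightarrow> bool" where
  "frobenius_algebra C A mu eta delta eps \<longleftrightarrow>
     hom C mu (TensO C A A) A \<and> hom C eta (Unit C) A \<and>
     hom C delta A (TensO C A A) \<and> hom C eps A (Unit C) \<and>
     Comp C mu (TensM C mu (Id C A)) = Comp C mu (TensM C (Id C A) mu) \<and>
     Comp C mu (TensM C eta (Id C A)) = Id C A \<and>
     Comp C mu (TensM C (Id C A) eta) = Id C A \<and>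
     Comp C (TensM C delta (Id C A)) delta = Comp C (TensM C (Id C A) delta) delta \<and>
     Comp C (TensM C eps (Id C A)) delta = Id C A \<and>
     Comp C (TensM C (Id C A) eps) delta = Id C A \<and>
     Comp C (TensM C (Id C A) mu) (TensM C delta (Id C A)) = Comp C delta mu \<and>
     Comp C delta mu = Comp C (TensM C mu (Id C A)) (TensM C (Id C A) delta)"

definition commutative_algebra :: "('o, 'm, 'k) rcat \<Rightarrow> 'o \<Rightarrow> 'm \<Rightarrow> bool" where
  "commutative_algebra C A mu \<longleftrightarrow> Comp C mu (Braid C A A) = mu"

definition special_frobenius ::
  "('o, 'm, 'k::field) rcat \<Rightarrow> 'o \<Rightarrow> 'm \<Rightarrow> 'm \<Rightarrow> 'm \<Rightarrow> 'm \<Rightarrow> bool" where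
  "special_frobenius C A mu eta delta eps \<longleftrightarrow>
     (\<exists>a. a \<noteq> 0 \<and> Comp C eps eta = Smul C a (Id C (Unit C))) \<and>
     (\<exists>b. b \<noteq> 0 \<and> Comp C mu delta = Smul C b (Id C A))"

end

theory Submission
  imports Defs
begin

(* Naturality of the twist, with \<theta> = id on 1 and \<theta> = -id on F, kills every morphism
  between 1 and F that commutes with \<theta> (char k \<noteq> 2).  Hence \<eta> = a i1 and \<epsilon> = b p1
  with a, b \<noteq> 0, and, since \<theta>_A is multiplicative for commutative A, the product of
  F with F lands in 1, giving a pairing m : F \<otimes> F \<rightarrow> 1.  Writing \<mu> in block form, the
  scalar \<mu> \<circ> \<Delta> = \<beta> id_A has F-entry 2/(ab) and 1-entry 1/(ab) + m \<circ> d, where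
  d = (p2 \<otimes> p2) \<Delta> i1; so m \<circ> d = 1/(ab).  The Frobenius relation gives d \<circ> m = 1/(ab)
  as well, so m is an isomorphism. *)

context ribbon_category
begin

lemma dom_id [simp]: "Dom C (Id C X) = X" and cod_id [simp]: "Cod C (Id C X) = X"
  using id_hom[of X] by (auto simp: hom_def)

lemma dom_comp [simp]: "Dom C g = Cod C f \<Longrightarrow> Dom C (Comp C g f) = Dom C f"
  and cod_comp [simp]: "Dom C g = Cod C f \<Longrightarrow> Cod C (Comp C g f) = Cod C g"
  using comp_hom by (auto simp: hom_def)

lemma dom_tensM [simp]: "Dom C (TensM C f g) = TensO C (Dom C f) (Dom C g)"
  and cod_tensM [simp]: "Cod C (TensM C f g) = TensO C (Cod C f) (Cod C g)"
  using tensM_hom by (auto simp: hom_def)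

lemma dom_smul [simp]: "Dom C (Smul C a f) = Dom C f"
  and cod_smul [simp]: "Cod C (Smul C a f) = Cod C f"
  using smul_hom[of f "Dom C f" "Cod C f"] by (auto simp: hom_def)

lemma dom_zero [simp]: "Dom C (Zero C X Y) = X" and cod_zero [simp]: "Cod C (Zero C X Y) = Y"
  using zero_hom by (auto simp: hom_def)

lemma dom_add [simp]: "Dom C f = Dom C g \<Longrightarrow> Cod C f = Cod C g \<Longrightarrow> Dom C (Add C f g) = Dom C f"
  and cod_add [simp]: "Dom C f = Dom C g \<Longrightarrow> Cod C f = Cod C g \<Longrightarrow> Cod C (Add C f g) = Cod C f"
  using add_hom[of f "Dom C f" "Cod C f" g] by (auto simp: hom_def)

lemma dom_braid [simp]: "Dom C (Braid C X Y) = TensO C X Y"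
  and cod_braid [simp]: "Cod C (Braid C X Y) = TensO C Y X"
  using braid_iso[of X Y] by (auto simp: iso_mor_def hom_def)

lemma dom_twist [simp]: "Dom C (Twist C X) = X" and cod_twist [simp]: "Cod C (Twist C X) = X"
  using twist_iso[of X] by (auto simp: iso_mor_def hom_def)

declare tensO_unit_left [simp] tensO_unit_right [simp] tensO_assoc [simp]

lemma Id_comp [simp]: "Cod C f = Y \<Longrightarrow> Comp C (Id C Y) f = f"
  and comp_Id [simp]: "Dom C f = X \<Longrightarrow> Comp C f (Id C X) = f"
  using comp_id_left comp_id_right by auto

lemma comp_assoc_right [simp]:
  "Dom C h = Cod C g \<Longrightarrow> Dom C g = Cod C f \<Longrightarrow> Comp C (Comp C h g) f = Comp C h (Comp C g f)"
  using comp_assoc by simp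

lemma comp_reassoc:
  "Comp C g f = h \<Longrightarrow> Dom C g = Cod C f \<Longrightarrow> Dom C f = Cod C x \<Longrightarrow>
   Comp C g (Comp C f x) = Comp C h x"
  by (simp del: comp_assoc_right add: comp_assoc)

lemma tensM_comp:
  "Dom C g = Cod C f \<Longrightarrow> Dom C g' = Cod C f' \<Longrightarrow>
   Comp C (TensM C g g') (TensM C f f') = TensM C (Comp C g f) (Comp C g' f')"
  using tensM_interchange by simp

lemma add_self_eq_zero:
  assumes "hom C f X Y" "Add C f f = f" shows "f = Zero C X Y"
proof -
  have "f = Add C f (Add C f (Smul C (-1) f))" using add_zero[OF assms(1)] add_neg[OF assms(1)] by simp
  also have "\<dots> = Add C (Add C f f) (Smul C (-1) f)"
    using add_assoc[OF assms(1) assms(1) smul_hom[OF assms(1)]] by simp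
  also have "\<dots> = Zero C X Y" using assms add_neg by simp
  finally show ?thesis .
qed

lemma smul_zero_left:
  assumes "hom C f X Y" shows "Smul C 0 f = Zero C X Y"
  using add_self_eq_zero[OF smul_hom[OF assms]] smul_add_scalar[of 0 0 f] by simp

lemma smul_zero_right [simp]: "Smul C a (Zero C X Y) = Zero C X Y"
  using smul_zero_left[OF zero_hom, of X Y] smul_smul[of a 0 "Zero C X Y"] by simp

lemma comp_zero_right [simp]: "Dom C g = Y \<Longrightarrow> Comp C g (Zero C X Y) = Zero C X (Cod C g)"
  using comp_smul_right[of g "Zero C X Y" 0] smul_zero_left[OF zero_hom, of X Y]
    smul_zero_left[of "Comp C g (Zero C X Y)" X "Cod C g"] by (simp add: hom_def)

lemma comp_zero_left [simp]: "Cod C f = Y \<Longrightarrow> Comp C (Zero C Y Z) f = Zero C (Dom C f) Z"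
  using comp_smul_left[of "Zero C Y Z" f 0] smul_zero_left[OF zero_hom, of Y Z]
    smul_zero_left[of "Comp C (Zero C Y Z) f" "Dom C f" Z] by (simp add: hom_def)

lemma tensM_zero_left [simp]:
  "TensM C (Zero C X Y) g = Zero C (TensO C X (Dom C g)) (TensO C Y (Cod C g))"
  using tensM_smul_left[of 0 "Zero C X Y" g] smul_zero_left[OF zero_hom, of X Y]
    smul_zero_left[OF tensM_hom, of "Zero C X Y" g] by simp

lemma add_zero_right [simp]: "Dom C f = X \<Longrightarrow> Cod C f = Y \<Longrightarrow> Add C f (Zero C X Y) = f"
  and add_zero_left [simp]: "Dom C f = X \<Longrightarrow> Cod C f = Y \<Longrightarrow> Add C (Zero C X Y) f = f"
  using add_zero[of f X Y] add_comm[of "Zero C X Y" X Y f] zero_hom by (auto simp: hom_def)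

lemma self_eq_neg_imp_zero:
  assumes "hom C f X Y" "Smul C (-1) f = f" shows "f = Zero C X Y"
proof -
  have "Smul C 2 f = Add C f (Smul C (-1) f)"
    using smul_add_scalar[of 1 1 f] assms(2) by (simp add: smul_one)
  also have "\<dots> = Zero C X Y" using add_neg[OF assms(1)] .
  finally have "Smul C (1/2) (Smul C 2 f) = Zero C X Y" by simp
  thus ?thesis using smul_smul char_not_2 smul_one by simp
qed

lemma smul_cancel:
  assumes "hom C f X Y" "f \<noteq> Zero C X Y" "Smul C a f = Smul C b f" shows "a = b"
proof (rule ccontr)
  assume "a \<noteq> b"
  have "Smul C (a - b) f = Add C (Smul C b f) (Smul C (-1) (Smul C b f))"
    using smul_add_scalar[of a "-b" f] assms(3) smul_smul by simp
  also have "\<dots> = Zero C X Y" using add_neg smul_hom[OF assms(1)] by blast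
  finally have "Smul C (1/(a-b)) (Smul C (a - b) f) = Zero C X Y" by simp
  thus False using \<open>a \<noteq> b\<close> smul_smul smul_one assms(2) by simp
qed

lemma smul_eq_Id_imp_eq:
  assumes "a \<noteq> 0" "Smul C a f = Id C X" shows "f = Smul C (1/a) (Id C X)"
  using assms smul_smul[of "1/a" a f] smul_one by simp

lemma twist_fixed_to_odd_eq_zero:
  assumes "hom C f X Y" "Twist C Y = Smul C (-1) (Id C Y)" "Comp C (Twist C Y) f = f"
  shows "f = Zero C X Y"
  using self_eq_neg_imp_zero[OF assms(1)] assms by (simp add: comp_smul_left hom_def)

lemma twist_fixed_from_odd_eq_zero:
  assumes "hom C f X Y" "Twist C X = Smul C (-1) (Id C X)" "Comp C f (Twist C X) = f"
  shows "f = Zero C X Y"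
  using self_eq_neg_imp_zero[OF assms(1)] assms by (simp add: comp_smul_right hom_def)

lemma id_nonzero_if_not_zero_object:
  assumes "\<not> zero_object C X" shows "Id C X \<noteq> Zero C X X"
proof
  assume "Id C X = Zero C X X"
  then have "zero_object C X"
    unfolding zero_object_def
    by (metis Id_comp comp_Id comp_zero_left comp_zero_right dom_zero cod_zero)
  with assms show False ..
qed

end

locale biproduct_in_ribbon = ribbon_category C
  for C :: "('o, 'm, 'k::field) rcat" +
  fixes S X Y :: 'o and i1 p1 i2 p2 :: 'm
  assumes biproduct: "is_biproduct C S X Y i1 p1 i2 p2"
begin

lemma dom_i1 [simp]: "Dom C i1 = X" and cod_i1 [simp]: "Cod C i1 = S"
  and dom_p1 [simp]: "Dom C p1 = S" and cod_p1 [simp]: "Cod C p1 = X"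
  and dom_i2 [simp]: "Dom C i2 = Y" and cod_i2 [simp]: "Cod C i2 = S"
  and dom_p2 [simp]: "Dom C p2 = S" and cod_p2 [simp]: "Cod C p2 = Y"
  using biproduct by (auto simp: is_biproduct_def hom_def)

lemma p1_i1 [simp]: "Comp C p1 i1 = Id C X"
  and p2_i2 [simp]: "Comp C p2 i2 = Id C Y"
  and id_decomp: "Add C (Comp C i1 p1) (Comp C i2 p2) = Id C S"
  using biproduct by (auto simp: is_biproduct_def)

lemma p1_i1_comp [simp]: "Cod C f = X \<Longrightarrow> Comp C p1 (Comp C i1 f) = f"
  and p2_i2_comp [simp]: "Cod C f = Y \<Longrightarrow> Comp C p2 (Comp C i2 f) = f"
  by (simp_all add: comp_reassoc)

lemma p1_i2 [simp]: "Comp C p1 i2 = Zero C Y X"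
proof (rule add_self_eq_zero)
  have "Comp C p1 i2 = Comp C p1 (Comp C (Add C (Comp C i1 p1) (Comp C i2 p2)) i2)"
    by (simp add: id_decomp)
  also have "\<dots> = Add C (Comp C p1 i2) (Comp C p1 i2)"
    by (simp add: comp_add_right comp_add_left hom_def)
  finally show "Add C (Comp C p1 i2) (Comp C p1 i2) = Comp C p1 i2" by simp
qed (simp add: hom_def)

lemma p2_i1 [simp]: "Comp C p2 i1 = Zero C X Y"
proof (rule add_self_eq_zero)
  have "Comp C p2 i1 = Comp C p2 (Comp C (Add C (Comp C i1 p1) (Comp C i2 p2)) i1)"
    by (simp add: id_decomp)
  also have "\<dots> = Add C (Comp C p2 i1) (Comp C p2 i1)"
    by (simp add: comp_add_right comp_add_left hom_def)
  finally show "Add C (Comp C p2 i1) (Comp C p2 i1) = Comp C p2 i1" by simp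
qed (simp add: hom_def)

lemma p1_i2_comp [simp]: "Cod C f = Y \<Longrightarrow> Comp C p1 (Comp C i2 f) = Zero C (Dom C f) X"
  and p2_i1_comp [simp]: "Cod C f = X \<Longrightarrow> Comp C p2 (Comp C i1 f) = Zero C (Dom C f) Y"
  by (simp_all add: comp_reassoc)

lemma decomp_left:
  assumes "Cod C f = S" shows "f = Add C (Comp C i1 (Comp C p1 f)) (Comp C i2 (Comp C p2 f))"
proof -
  have "f = Comp C (Add C (Comp C i1 p1) (Comp C i2 p2)) f" using assms by (simp add: id_decomp)
  also have "\<dots> = Add C (Comp C i1 (Comp C p1 f)) (Comp C i2 (Comp C p2 f))"
    using assms by (simp add: comp_add_right hom_def)
  finally show ?thesis .
qed

lemma decomp_right:
  assumes "Dom C f = S" shows "f = Add C (Comp C (Comp C f i1) p1) (Comp C (Comp C f i2) p2)"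
proof -
  have "f = Comp C f (Add C (Comp C i1 p1) (Comp C i2 p2))" using assms by (simp add: id_decomp)
  also have "\<dots> = Add C (Comp C (Comp C f i1) p1) (Comp C (Comp C f i2) p2)"
    using assms by (simp add: comp_add_left hom_def)
  finally show ?thesis .
qed

lemma id_nonzero_if_summand_nonzero:
  assumes "Id C X \<noteq> Zero C X X" shows "Id C S \<noteq> Zero C S S"
proof
  assume "Id C S = Zero C S S"
  then have "Comp C p1 (Comp C (Id C S) i1) = Zero C X X" by simp
  with assms show False by simp
qed

end

locale frobenius_in_ribbon = ribbon_category C
  for C :: "('o, 'm, 'k::field) rcat" +
  fixes A :: 'o and mu eta delta eps :: 'm
  assumes frobenius: "frobenius_algebra C A mu eta delta eps"
begin

lemma dom_mu [simp]: "Dom C mu = TensO C A A" and cod_mu [simp]: "Cod C mu = A"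
  and dom_eta [simp]: "Dom C eta = Unit C" and cod_eta [simp]: "Cod C eta = A"
  and dom_delta [simp]: "Dom C delta = A" and cod_delta [simp]: "Cod C delta = TensO C A A"
  and dom_eps [simp]: "Dom C eps = A" and cod_eps [simp]: "Cod C eps = Unit C"
  using frobenius by (auto simp: frobenius_algebra_def hom_def)

lemma unit_left: "Comp C mu (TensM C eta (Id C A)) = Id C A"
  and unit_right: "Comp C mu (TensM C (Id C A) eta) = Id C A"
  and counit_left: "Comp C (TensM C eps (Id C A)) delta = Id C A"
  and counit_right: "Comp C (TensM C (Id C A) eps) delta = Id C A"
  and frobenius_right: "Comp C delta mu = Comp C (TensM C mu (Id C A)) (TensM C (Id C A) delta)"
  using frobenius by (auto simp: frobenius_algebra_def)

lemma eta_nonzero: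
  assumes "Id C A \<noteq> Zero C A A" shows "eta \<noteq> Zero C (Unit C) A"
  using assms unit_left by force

lemma eps_nonzero:
  assumes "Id C A \<noteq> Zero C A A" shows "eps \<noteq> Zero C A (Unit C)"
  using assms counit_left by force

lemma twist_mu:
  assumes "commutative_algebra C A mu"
  shows "Comp C (Twist C A) mu = Comp C mu (TensM C (Twist C A) (Twist C A))"
proof -
  have mu_braid: "Comp C mu (Braid C A A) = mu"
    using assms by (simp add: commutative_algebra_def)
  have "Comp C (Twist C A) mu = Comp C mu (Twist C (TensO C A A))"
    using twist_natural[of mu] by simp
  also have "\<dots> = Comp C mu (TensM C (Twist C A) (Twist C A))"
    using twist_tensor[of A A] comp_reassoc[OF mu_braid] by simp
  finally show ?thesis .
qed

end

locale unit_plus_odd_frobenius =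
  frobenius_in_ribbon C A mu eta delta eps + biproduct_in_ribbon C A "Unit C" F i1 p1 i2 p2
  for C :: "('o, 'm, 'k::field) rcat" and A mu eta delta eps F i1 p1 i2 p2 +
  assumes commutative: "commutative_algebra C A mu"
    and special: "special_frobenius C A mu eta delta eps"
    and F_nonzero: "\<not> zero_object C F"
    and twist_F: "Twist C F = Smul C (-1) (Id C F)"
begin

lemma twist_i2 [simp]: "Comp C (Twist C A) i2 = Smul C (-1) i2"
  using twist_natural[of i2] twist_F by (simp add: comp_smul_right)

lemma p2_twist [simp]: "Comp C p2 (Twist C A) = Smul C (-1) p2"
  using twist_natural[of p2] twist_F by (simp add: comp_smul_left)

lemma p2_eta: "Comp C p2 eta = Zero C (Unit C) F"
proof (rule twist_fixed_to_odd_eq_zero)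
  show "Comp C (Twist C F) (Comp C p2 eta) = Comp C p2 eta"
    using twist_natural[of "Comp C p2 eta"] twist_unit by simp
qed (simp_all add: hom_def twist_F)

lemma eps_i2: "Comp C eps i2 = Zero C F (Unit C)"
proof (rule twist_fixed_from_odd_eq_zero)
  have "Comp C eps (Twist C A) = eps"
    using twist_natural[of eps] twist_unit by simp
  then show "Comp C (Comp C eps i2) (Twist C F) = Comp C eps i2"
    using twist_natural[of i2] comp_reassoc[of eps "Twist C A" eps i2] by simp
qed (simp_all add: hom_def twist_F)

lemma eta_multiple_of_i1:
  obtains a where "a \<noteq> 0" "eta = Smul C a i1"
proof -
  obtain a where a: "Comp C p1 eta = Smul C a (Id C (Unit C))"
    using unit_abs_simple[of "Comp C p1 eta"] by (auto simp: hom_def)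
  have "eta = Smul C a i1"
    using decomp_left[of eta] p2_eta a by (simp add: comp_smul_right)
  moreover have "a \<noteq> 0"
    using eta_nonzero[OF id_nonzero_if_summand_nonzero[OF unit_nonzero]] \<open>eta = Smul C a i1\<close>
      smul_zero_left[of i1 "Unit C" A] by (auto simp: hom_def)
  ultimately show thesis using that by blast
qed

lemma eps_multiple_of_p1:
  obtains b where "b \<noteq> 0" "eps = Smul C b p1"
proof -
  obtain b where b: "Comp C eps i1 = Smul C b (Id C (Unit C))"
    using unit_abs_simple[of "Comp C eps i1"] by (auto simp: hom_def)
  have "eps = Smul C b p1"
    using decomp_right[of eps] eps_i2 b by (simp add: comp_smul_left)
  moreover have "b \<noteq> 0"
    using eps_nonzero[OF id_nonzero_if_summand_nonzero[OF unit_nonzero]] \<open>eps = Smul C b p1\<close>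
      smul_zero_left[of p1 A "Unit C"] by (auto simp: hom_def)
  ultimately show thesis using that by blast
qed

definition pairing :: 'm where
  "pairing = Comp C p1 (Comp C mu (TensM C i2 i2))"

lemma dom_pairing [simp]: "Dom C pairing = TensO C F F"
  and cod_pairing [simp]: "Cod C pairing = Unit C"
  by (simp_all add: pairing_def)

definition copairing :: 'm where
  "copairing = Comp C (TensM C p2 p2) (Comp C delta i1)"

lemma dom_copairing [simp]: "Dom C copairing = Unit C"
  and cod_copairing [simp]: "Cod C copairing = TensO C F F"
  by (simp_all add: copairing_def)

lemma mu_i2_i2: "Comp C mu (TensM C i2 i2) = Comp C i1 pairing"
proof -
  have "Comp C p2 (Comp C mu (TensM C i2 i2)) = Zero C (TensO C F F) F"
  proof (rule twist_fixed_to_odd_eq_zero)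
    have "Comp C p2 (Comp C mu (TensM C i2 i2))
        = Comp C p2 (Comp C mu (TensM C (Comp C (Twist C A) i2) (Comp C (Twist C A) i2)))"
      by (simp add: tensM_smul_left tensM_smul_right comp_smul_right smul_smul smul_one)
    also have "\<dots> = Comp C p2 (Comp C (Twist C A) (Comp C mu (TensM C i2 i2)))"
      by (simp add: tensM_interchange comp_reassoc[OF twist_mu[OF commutative]] del: twist_i2)
    also have "\<dots> = Comp C (Twist C F) (Comp C p2 (Comp C mu (TensM C i2 i2)))"
      by (simp add: twist_F comp_smul_left del: comp_assoc_right add: comp_assoc)
    finally show "Comp C (Twist C F) (Comp C p2 (Comp C mu (TensM C i2 i2)))
        = Comp C p2 (Comp C mu (TensM C i2 i2))" ..
  qed (simp_all add: hom_def twist_F)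
  then show ?thesis
    using decomp_left[of "Comp C mu (TensM C i2 i2)"] by (simp add: pairing_def)
qed

end

locale unit_plus_odd_frobenius_coeffs = unit_plus_odd_frobenius +
  fixes a b
  assumes a_nonzero: "a \<noteq> 0" and eta_eq: "eta = Smul C a i1"
    and b_nonzero: "b \<noteq> 0" and eps_eq: "eps = Smul C b p1"
begin

lemmas smul_simps [simp] =
  tensM_smul_left tensM_smul_right comp_smul_left comp_smul_right smul_smul smul_one

lemma mu_i1_Id: "Comp C mu (TensM C i1 (Id C A)) = Smul C (1/a) (Id C A)"
  using unit_left a_nonzero by (intro smul_eq_Id_imp_eq) (simp_all add: eta_eq)

lemma mu_Id_i1: "Comp C mu (TensM C (Id C A) i1) = Smul C (1/a) (Id C A)"
  using unit_right a_nonzero by (intro smul_eq_Id_imp_eq) (simp_all add: eta_eq)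

lemma p1_Id_delta: "Comp C (TensM C p1 (Id C A)) delta = Smul C (1/b) (Id C A)"
  using counit_left b_nonzero by (intro smul_eq_Id_imp_eq) (simp_all add: eps_eq)

lemma Id_p1_delta: "Comp C (TensM C (Id C A) p1) delta = Smul C (1/b) (Id C A)"
  using counit_right b_nonzero by (intro smul_eq_Id_imp_eq) (simp_all add: eps_eq)

lemma mu_decomp:
  "mu = Add C (Smul C (1/a) (TensM C p1 (Id C A)))
          (Add C (Smul C (1/a) (Comp C i2 (Comp C p2 (TensM C (Id C A) p1))))
                 (Comp C i1 (Comp C pairing (TensM C p2 p2))))"
proof -
  have mu_on_1_A: "Comp C mu (TensM C (Comp C i1 p1) (Id C A)) = Smul C (1/a) (TensM C p1 (Id C A))"
  proof -
    have "TensM C (Comp C i1 p1) (Id C A) = Comp C (TensM C i1 (Id C A)) (TensM C p1 (Id C A))"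
      by (simp add: tensM_comp)
    then show ?thesis by (simp add: comp_reassoc[OF mu_i1_Id])
  qed
  have mu_on_F_1: "Comp C mu (TensM C (Comp C i2 p2) (Comp C i1 p1))
      = Smul C (1/a) (Comp C i2 (Comp C p2 (TensM C (Id C A) p1)))"
  proof -
    have "Comp C i2 (Comp C p2 (TensM C (Id C A) p1)) = TensM C (Comp C i2 p2) p1"
      using tensM_comp[of "Comp C i2 p2" "Id C A" "Id C (Unit C)" p1] tensM_unit_right by simp
    then have "TensM C (Comp C i2 p2) (Comp C i1 p1)
        = Comp C (TensM C (Id C A) i1) (Comp C i2 (Comp C p2 (TensM C (Id C A) p1)))"
      by (simp add: tensM_comp)
    then show ?thesis by (simp add: comp_reassoc[OF mu_Id_i1])
  qed
  have mu_on_F_F: "Comp C mu (TensM C (Comp C i2 p2) (Comp C i2 p2))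
      = Comp C i1 (Comp C pairing (TensM C p2 p2))"
    by (simp add: tensM_interchange comp_reassoc[OF mu_i2_i2])
  have "mu = Comp C mu (TensM C (Add C (Comp C i1 p1) (Comp C i2 p2)) (Id C A))"
    by (simp add: id_decomp tensM_id)
  also have "\<dots> = Add C (Comp C mu (TensM C (Comp C i1 p1) (Id C A)))
      (Comp C mu (TensM C (Comp C i2 p2) (Id C A)))"
    by (simp add: tensM_add_left comp_add_left hom_def)
  also have "\<dots> = Add C (Comp C mu (TensM C (Comp C i1 p1) (Id C A)))
      (Comp C mu (TensM C (Comp C i2 p2) (Add C (Comp C i1 p1) (Comp C i2 p2))))"
    by (simp add: id_decomp)
  also have "\<dots> = Add C (Comp C mu (TensM C (Comp C i1 p1) (Id C A)))
      (Add C (Comp C mu (TensM C (Comp C i2 p2) (Comp C i1 p1)))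
             (Comp C mu (TensM C (Comp C i2 p2) (Comp C i2 p2))))"
    by (simp add: tensM_add_right comp_add_left hom_def)
  finally show ?thesis using mu_on_1_A mu_on_F_1 mu_on_F_F by simp
qed

lemma mu_delta_decomp:
  "Comp C mu delta = Add C (Smul C (1 / (a * b)) (Id C A))
     (Add C (Smul C (1 / (a * b)) (Comp C i2 p2))
            (Comp C i1 (Comp C pairing (Comp C (TensM C p2 p2) delta))))"
proof -
  have "Comp C mu delta = Add C (Comp C (Smul C (1/a) (TensM C p1 (Id C A))) delta)
      (Add C (Comp C (Smul C (1/a) (Comp C i2 (Comp C p2 (TensM C (Id C A) p1)))) delta)
             (Comp C (Comp C i1 (Comp C pairing (TensM C p2 p2))) delta))"
    by (subst mu_decomp) (simp add: comp_add_right hom_def)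
  then show ?thesis
    by (simp add: p1_Id_delta Id_p1_delta)
qed

lemma pairing_copairing: "Comp C pairing copairing = Smul C (1 / (a * b)) (Id C (Unit C))"
proof -
  obtain beta where beta: "Comp C mu delta = Smul C beta (Id C A)"
    using special unfolding special_frobenius_def by blast
  obtain c where c: "Comp C pairing copairing = Smul C c (Id C (Unit C))"
    using unit_abs_simple[of "Comp C pairing copairing"] by (auto simp: hom_def)
  have "Smul C beta (Id C F) = Comp C p2 (Comp C (Comp C mu delta) i2)"
    by (simp add: beta)
  also have "\<dots> = Add C (Smul C (1 / (a * b)) (Id C F)) (Smul C (1 / (a * b)) (Id C F))"
    by (simp add: mu_delta_decomp comp_add_right comp_add_left hom_def)
  also have "\<dots> = Smul C (1 / (a * b) + 1 / (a * b)) (Id C F)"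
    by (rule smul_add_scalar[symmetric])
  finally have beta_F: "beta = 1 / (a * b) + 1 / (a * b)"
    using smul_cancel[OF id_hom id_nonzero_if_not_zero_object[OF F_nonzero]] by blast
  have "Smul C beta (Id C (Unit C)) = Comp C p1 (Comp C (Comp C mu delta) i1)"
    by (simp add: beta)
  also have "\<dots> = Add C (Smul C (1 / (a * b)) (Id C (Unit C))) (Comp C pairing copairing)"
    by (simp add: mu_delta_decomp comp_add_right comp_add_left hom_def copairing_def)
  also have "\<dots> = Smul C (1 / (a * b) + c) (Id C (Unit C))"
    by (simp add: c smul_add_scalar)
  finally have "beta = 1 / (a * b) + c"
    using smul_cancel[OF id_hom unit_nonzero] by blast
  with beta_F c show ?thesis by (metis add_left_imp_eq)
qed

lemma p2_mu_i2_Id: "Comp C p2 (Comp C mu (TensM C i2 (Id C A))) = Smul C (1/a) (TensM C (Id C F) p1)"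
proof -
  have "Comp C (TensM C p1 (Id C A)) (TensM C i2 (Id C A)) = Zero C (TensO C F A) A"
    by (simp add: tensM_comp)
  moreover have "Comp C (TensM C (Id C A) p1) (TensM C i2 (Id C A)) = Comp C i2 (TensM C (Id C F) p1)"
    using tensM_comp[of i2 "Id C F" "Id C (Unit C)" p1] tensM_unit_right[of i2]
    by (simp add: tensM_comp)
  ultimately show ?thesis
    by (subst mu_decomp) (simp add: comp_add_right comp_add_left hom_def)
qed

lemma copairing_pairing:
  "Comp C copairing pairing = Smul C (1 / (a * b)) (Id C (TensO C F F))"
proof -
  have "Comp C copairing pairing = Comp C (TensM C p2 p2) (Comp C delta (Comp C mu (TensM C i2 i2)))"
    by (simp add: copairing_def mu_i2_i2)
  also have "\<dots> = Comp C (TensM C p2 p2)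
      (Comp C (TensM C mu (Id C A)) (Comp C (TensM C (Id C A) delta) (TensM C i2 i2)))"
    by (simp add: comp_assoc frobenius_right del: comp_assoc_right)
  also have "\<dots> = Comp C (TensM C (Comp C p2 mu) p2) (TensM C i2 (Comp C delta i2))"
    by (simp add: tensM_comp comp_assoc del: comp_assoc_right)
  also have "TensM C i2 (Comp C delta i2)
      = Comp C (TensM C (TensM C i2 (Id C A)) (Id C A)) (TensM C (Id C F) (Comp C delta i2))"
    by (simp add: tensM_comp tensM_assoc tensM_id)
  also have "Comp C (TensM C (Comp C p2 mu) p2) (Comp C (TensM C (TensM C i2 (Id C A)) (Id C A))
        (TensM C (Id C F) (Comp C delta i2)))
      = Comp C (TensM C (Comp C p2 (Comp C mu (TensM C i2 (Id C A)))) p2)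
          (TensM C (Id C F) (Comp C delta i2))"
    by (simp add: tensM_comp comp_assoc del: comp_assoc_right)
  also have "\<dots> = Smul C (1/a) (TensM C (Id C F) (Comp C (TensM C p1 p2) (Comp C delta i2)))"
    by (simp add: p2_mu_i2_Id tensM_assoc tensM_comp)
  also have "TensM C p1 p2 = Comp C p2 (TensM C p1 (Id C A))"
    using tensM_comp[of "Id C (Unit C)" p1 p2 "Id C A"] tensM_unit_left[of p2] by simp
  finally show ?thesis
    by (simp add: comp_reassoc[OF p1_Id_delta] tensM_id)
qed

lemma pairing_iso: "iso_mor C pairing (TensO C F F) (Unit C)"
  unfolding iso_mor_def
proof (intro conjI exI)
  show "Comp C (Smul C (a * b) copairing) pairing = Id C (TensO C F F)"
    using copairing_pairing a_nonzero b_nonzero by simp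
  show "Comp C pairing (Smul C (a * b) copairing) = Id C (Unit C)"
    using pairing_copairing a_nonzero b_nonzero by simp
qed (simp_all add: hom_def)

end

context unit_plus_odd_frobenius
begin

theorem tensor_square_isomorphic_unit: "isomorphic C (TensO C F F) (Unit C)"
proof -
  obtain a where "a \<noteq> 0" "eta = Smul C a i1" by (rule eta_multiple_of_i1)
  moreover obtain b where "b \<noteq> 0" "eps = Smul C b p1" by (rule eps_multiple_of_p1)
  ultimately interpret unit_plus_odd_frobenius_coeffs C A mu eta delta eps F i1 p1 i2 p2 a b
    by unfold_locales
  show ?thesis
    using pairing_iso by (auto simp: isomorphic_def)
qed

end

theorem mainTheorem2:
  fixes C :: "('o, 'm, 'k::field) rcat"
    and A F :: 'o and mu eta delta eps i1 p1 i2 p2 :: 'm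
  assumes "ribbon_category C"
    and "frobenius_algebra C A mu eta delta eps"
    and "commutative_algebra C A mu"
    and "special_frobenius C A mu eta delta eps"
    and "is_biproduct C A (Unit C) F i1 p1 i2 p2"
    and "\<not> zero_object C F"
    and "Twist C F = Smul C (-1) (Id C F)"
  shows "isomorphic C (TensO C F F) (Unit C)"
proof -
  interpret unit_plus_odd_frobenius C A mu eta delta eps F i1 p1 i2 p2
    using assms by (intro_locales; simp add: frobenius_in_ribbon_axioms_def
        biproduct_in_ribbon_axioms_def unit_plus_odd_frobenius_axioms_def)
  show ?thesis by (rule tensor_square_isomorphic_unit)
qed

end
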